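(* Let $q$ be a prime power, $m \ge 2$ an integer, $g = \gcd(q-1, m(m-1))$, and $\lambda$ a partition of $m$ such that $S_{\lambda,\mathbb{F}_q}$ is nonempty. If $\delta_1, \delta_2 \in D_{\lambda,\mathbb{F}_q}$ and $\delta_2/\delta_1$ is a $g$th power in $\mathbb{F}_q^\times$, then the number of polynomials in $S_{\lambda,\mathbb{F}_q}$ with discriminant $\delta_1$ equals the number of polynomials in $S_{\lambda,\mathbb{F}_q}$ with discriminant $\delta_2$.
   Context: For a partition $\lambda = (\lambda_1,\dots,\lambda_k)$ of $m$ (positive integers summing to $m$), a monic $f \in \mathbb{F}_q[x]$ of degree $m$ has factorization type $\lambda$ if $f = \pi_1\cdots\pi_k$ with the $\pi_i$ distinct monic irreducible polynomials and $\deg \pi_i = \lambda_i$. $S_{\lambda,\mathbb{F}_q}$ is the set of monic squarefree polynomials in $\mathbb{F}_q[x]$ of factorization type $\lambda$, and $D_{\lambda,\mathbb{F}_q} = \{\operatorname{disc}(f) : f \in S_{\lambda,\mathbb{F}_q}\}$. For $f$ of degree $m\ge 2$ with leading coefficient $a_m$ and roots $\alpha_i$ in a splitting field, $\operatorname{disc}(f) = a_m^{2m-2}\prod_{i<j}(\alpha_i-\alpha_j)^2$. *)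

theory Defs
  imports "HOL-Computational_Algebra.Computational_Algebra" "Subresultants.Resultant_Prelim"
begin

text \<open>This equals lc(f)^(2m-2) * prod_{i<j} (alpha_i - alpha_j)^2.\<close>
definition disc :: "'a :: field poly \<Rightarrow> 'a" where
  "disc f = (let m = degree f in
     (-1) ^ (m * (m - 1) div 2) * resultant_sub m (m - 1) f (pderiv f) / lead_coeff f)"

definition has_fact_type :: "'a :: field poly \<Rightarrow> nat multiset \<Rightarrow> bool" where
  "has_fact_type f lam \<longleftrightarrow>
     (\<exists>P. finite P \<and> (\<forall>p\<in>P. monic p \<and> irreducible p) \<and> f = \<Prod>P \<and>
          image_mset degree (mset_set P) = lam)"

definition S_lam :: "nat multiset \<Rightarrow> 'a :: field poly set" where
  "S_lam lam = {f. monic f \<and> squarefree f \<and> has_fact_type f lam}"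

definition D_lam :: "nat multiset \<Rightarrow> 'a :: field set" where
  "D_lam lam = disc ` S_lam lam"

end

theory Submission
  imports Defs
begin

(* For a nonzero a, the substitution f(x) to a^(-deg f) f(a x) is a multiplicative bijection
   of F[x] preserving degree and monicity, so it permutes the monic squarefree polynomials of
   each factorization type. It rescales the rows and columns of the Sylvester matrix of f and f',
   which divides the discriminant by a^(m(m-1)). Hence the number of polynomials of type lambda
   with discriminant delta only depends on delta modulo m(m-1)-th powers, and by Bezout together
   with x^(q-1) = 1 every g-th power in F_q^* is an m(m-1)-th power. *)

locale multiplicative_bij =
  fixes h :: "'a::comm_semiring_1 \<Rightarrow> 'b::comm_semiring_1"
  assumes bij: "bij h"
    and mult: "h (x * y) = h x * h y"
begin

lemma preimageE:
  obtains x where "y = h x"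
  using bij by (metis bij_pointE)

lemma eq_iff [simp]: "h x = h y \<longleftrightarrow> x = y"
  using bij by (simp add: bij_is_inj inj_eq)

lemma dvd_iff: "h x dvd h y \<longleftrightarrow> x dvd y"
proof
  assume "h x dvd h y"
  then obtain z where z: "h y = h x * z" ..
  obtain w where "z = h w"
    by (rule preimageE)
  with z have "h y = h (x * w)"
    by (simp add: mult)
  then show "x dvd y"
    by simp
qed (auto simp: mult)

lemma one: "h 1 = 1"
proof -
  obtain e where "1 = h e"
    by (rule preimageE)
  then show ?thesis
    using mult [of 1 e] by simp
qed

lemma zero: "h 0 = 0"
proof -
  obtain e where "0 = h e"
    by (rule preimageE)
  then show ?thesis
    using mult [of 0 e] by simp
qed

lemma unit_iff: "h x dvd 1 \<longleftrightarrow> x dvd 1"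
  using dvd_iff [of x 1] by (simp add: one)

lemma map_prod: "h (prod f A) = (\<Prod>a\<in>A. h (f a))"
  by (induction A rule: infinite_finite_induct) (simp_all add: one mult)

lemma irreducible:
  assumes "irreducible x"
  shows "irreducible (h x)"
proof (rule irreducibleI)
  show "h x \<noteq> 0" "\<not> h x dvd 1"
    using assms by (auto simp: zero [symmetric] unit_iff)
  fix u v
  assume uv: "h x = u * v"
  obtain u' v' where "u = h u'" "v = h v'"
    by (metis preimageE)
  with uv have "x = u' * v'"
    by (simp flip: mult)
  with assms show "u dvd 1 \<or> v dvd 1"
    by (simp add: \<open>u = h u'\<close> \<open>v = h v'\<close> unit_iff irreducibleD)
qed

lemma squarefree:
  assumes "squarefree x"
  shows "squarefree (h x)"
proof (rule squarefreeI)
  fix y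
  assume y: "y\<^sup>2 dvd h x"
  obtain y' where "y = h y'"
    by (rule preimageE)
  with y have "h (y'\<^sup>2) dvd h x"
    by (simp add: power2_eq_square mult)
  with assms show "y dvd 1"
    by (simp add: \<open>y = h y'\<close> dvd_iff unit_iff squarefreeD)
qed

end

lemma det_rescaled_rows_cols:
  fixes A B :: "'a::comm_ring_1 mat"
  assumes "A \<in> carrier_mat n n" and "B \<in> carrier_mat n n"
    and "\<And>i j. i < n \<Longrightarrow> j < n \<Longrightarrow> B $$ (i, j) * c j = r i * A $$ (i, j)"
  shows "det B * prod c {0..<n} = prod r {0..<n} * det A"
proof -
  have "det B * prod c {0..<n} =
      (\<Sum>p | p permutes {0..<n}. signof p * (\<Prod>i=0..<n. B $$ (i, p i) * c (p i)))"
    using assms(1,2)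
    by (simp add: det_def sum_distrib_right prod.distrib mult.assoc comp_def
        prod.permute [of _ "{0..<n}" c])
  also have "\<dots> = (\<Sum>p | p permutes {0..<n}. signof p * (\<Prod>i=0..<n. r i * A $$ (i, p i)))"
    using assms(3)
    by (intro sum.cong prod.cong arg_cong [where f = "(*) _"]) (auto simp: permutes_in_image)
  also have "\<dots> = prod r {0..<n} * det A"
    using assms(1) by (simp add: det_def sum_distrib_left prod.distrib mult_ac)
  finally show ?thesis .
qed

lemma resultant_sub_rescale:
  fixes p q p' q' :: "'a::idom poly"
  assumes "a \<noteq> 0"
    and p': "\<And>k. coeff p' k = c * a ^ k * coeff p k"
    and q': "\<And>k. coeff q' k = d * a ^ k * coeff q k"
  shows "resultant_sub m n p' q' = c ^ n * d ^ m * a ^ (m * n) * resultant_sub m n p q"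
proof -
  \<comment> \<open>row i of the Sylvester matrix gets the factor r i, column j the factor a^(-j)\<close>
  define r where "r i = (if i < n then c * a ^ m else d) * a ^ i" for i
  have entries: "sylvester_mat_sub m n p' q' $$ (i, j) * a ^ j = r i * sylvester_mat_sub m n p q $$ (i, j)"
    if "i < m + n" "j < m + n" for i j
  proof -
    have "a ^ (m + i - j) * a ^ j = a ^ m * a ^ i" if "j \<le> m + i"
      using that by (simp flip: power_add)
    moreover have "a ^ (i - j) * a ^ j = a ^ i" if "j \<le> i"
      using that by (simp flip: power_add)
    ultimately show ?thesis
      using that by (auto simp: sylvester_mat_sub_index r_def p' q' mult_ac)
  qed
  have split: "{0..<m + n} \<inter> {i. i < n} = {0..<n}" "{0..<m + n} \<inter> - {i. i < n} = {n..<m + n}"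
    by auto
  have "det (sylvester_mat_sub m n p' q') * (\<Prod>i=0..<m + n. a ^ i) =
      (\<Prod>i=0..<m + n. r i) * det (sylvester_mat_sub m n p q)"
    by (rule det_rescaled_rows_cols) (simp_all add: entries sylvester_mat_sub_carrier)
  also have "(\<Prod>i=0..<m + n. r i) = c ^ n * d ^ m * a ^ (m * n) * (\<Prod>i=0..<m + n. a ^ i)"
    using split by (simp add: r_def prod.distrib prod.If_cases power_mult_distrib power_mult mult_ac)
  finally show ?thesis
    using \<open>a \<noteq> 0\<close> by (simp add: resultant_sub_def)
qed

definition poly_rescale :: "'a::field \<Rightarrow> 'a poly \<Rightarrow> 'a poly" where
  "poly_rescale a f = Polynomial.smult (inverse (a ^ degree f)) (f \<circ>\<^sub>p [:0, a:])"

lemma coeff_poly_rescale: "coeff (poly_rescale a f) k = inverse (a ^ degree f) * a ^ k * coeff f k"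
  by (simp add: poly_rescale_def coeff_pcompose_linear)

lemma degree_poly_rescale [simp]: "a \<noteq> 0 \<Longrightarrow> degree (poly_rescale a f) = degree f"
  by (simp add: poly_rescale_def degree_pcompose)

lemma coeff_poly_rescale_degree [simp]:
  "a \<noteq> 0 \<Longrightarrow> coeff (poly_rescale a f) (degree f) = lead_coeff f"
  by (simp add: coeff_poly_rescale)

lemma poly_rescale_inverse [simp]:
  "a \<noteq> 0 \<Longrightarrow> poly_rescale (inverse a) (poly_rescale a f) = f"
  by (rule poly_eqI) (simp add: coeff_poly_rescale power_inverse field_simps)

lemma poly_rescale_mult:
  assumes "a \<noteq> 0"
  shows "poly_rescale a (p * q) = poly_rescale a p * poly_rescale a q"
proof (cases "p = 0 \<or> q = 0")
  case False
  then show ?thesis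
    using assms by (simp add: poly_rescale_def degree_mult_eq pcompose_mult power_add mult_ac)
qed (auto simp: poly_rescale_def)

lemma multiplicative_bij_poly_rescale:
  assumes "a \<noteq> 0"
  shows "multiplicative_bij (poly_rescale a)"
proof
  show "bij (poly_rescale a)"
    by (rule o_bij [where g = "poly_rescale (inverse a)"])
      (use assms poly_rescale_inverse [of "inverse a"] in \<open>auto simp: fun_eq_iff\<close>)
qed (use assms in \<open>rule poly_rescale_mult\<close>)

lemma disc_poly_rescale:
  assumes "a \<noteq> 0"
  shows "disc (poly_rescale a f) = disc f / a ^ (degree f * (degree f - 1))"
proof -
  define d where "d = degree f"
  have "coeff (pderiv (poly_rescale a f)) k = a * inverse (a ^ d) * a ^ k * coeff (pderiv f) k" for k
    by (simp add: coeff_pderiv coeff_poly_rescale d_def field_simps)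
  then have "resultant_sub d (d - 1) (poly_rescale a f) (pderiv (poly_rescale a f)) =
      inverse (a ^ d) ^ (d - 1) * (a * inverse (a ^ d)) ^ d * a ^ (d * (d - 1)) *
      resultant_sub d (d - 1) f (pderiv f)"
    by (intro resultant_sub_rescale assms) (simp_all add: coeff_poly_rescale d_def)
  also have "inverse (a ^ d) ^ (d - 1) * (a * inverse (a ^ d)) ^ d * a ^ (d * (d - 1)) =
      inverse (a ^ (d * (d - 1)))"
    using assms
    by (cases d) (simp_all add: power_mult_distrib power_mult [symmetric] power_add field_simps)
  finally show ?thesis
    using assms by (simp add: disc_def Let_def d_def divide_inverse mult_ac)
qed

lemma degree_S_lam:
  assumes "f \<in> S_lam lam"
  shows "degree f = sum_mset lam"
proof -
  obtain P where P: "finite P" "\<forall>p\<in>P. monic p \<and> irreducible p" "f = \<Prod>P"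
      "image_mset degree (mset_set P) = lam"
    using assms unfolding S_lam_def has_fact_type_def by blast
  then have "degree f = (\<Sum>p\<in>P. degree p)"
    by (auto intro: degree_prod_eq_sum_degree)
  also have "\<dots> = sum_mset lam"
    using P(4) by (simp add: sum_unfold_sum_mset)
  finally show ?thesis .
qed

lemma S_lam_multiplicative_bij:
  fixes h :: "'a::field poly \<Rightarrow> 'a poly"
  assumes "multiplicative_bij h"
    and degree: "\<And>p. degree (h p) = degree p"
    and monic: "\<And>p. monic p \<Longrightarrow> monic (h p)"
    and "f \<in> S_lam lam"
  shows "h f \<in> S_lam lam"
proof -
  interpret multiplicative_bij h by fact
  obtain P where P: "finite P" "\<forall>p\<in>P. monic p \<and> irreducible p" "f = \<Prod>P"
      "image_mset degree (mset_set P) = lam"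
    using \<open>f \<in> S_lam lam\<close> unfolding S_lam_def has_fact_type_def by blast
  have inj: "inj_on h P"
    by (simp add: inj_on_def)
  have "has_fact_type (h f) lam"
    unfolding has_fact_type_def
  proof (intro exI conjI)
    show "finite (h ` P)" "\<forall>p\<in>h ` P. monic p \<and> irreducible p"
      using P(1,2) by (auto simp: monic irreducible)
    show "h f = \<Prod>(h ` P)"
      using inj by (simp add: P(3) map_prod prod.reindex)
    show "image_mset degree (mset_set (h ` P)) = lam"
      using P(4) by (simp add: image_mset_mset_set [OF inj, symmetric] multiset.map_comp comp_def degree)
  qed
  with \<open>f \<in> S_lam lam\<close> show ?thesis
    by (simp add: S_lam_def monic squarefree)
qed

lemma poly_rescale_S_lam:
  assumes "a \<noteq> 0" and "f \<in> S_lam lam"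
  shows "poly_rescale a f \<in> S_lam lam"
  using assms
  by (intro S_lam_multiplicative_bij [where h = "poly_rescale a"] multiplicative_bij_poly_rescale) simp_all

lemma field_power_card_minus_one:
  fixes x :: "'a::{field, finite}"
  assumes "x \<noteq> 0"
  shows "x ^ (card (UNIV :: 'a set) - 1) = 1"
proof -
  have "(\<Prod>y\<in>UNIV - {0}. x * y) = (\<Prod>y\<in>UNIV - {0}. y)"
    by (rule prod.reindex_bij_witness [of _ "\<lambda>y. y / x" "\<lambda>y. x * y"]) (use assms in auto)
  then have "x ^ card (UNIV - {0 :: 'a}) * (\<Prod>y\<in>UNIV - {0}. y) = 1 * (\<Prod>y\<in>UNIV - {0 :: 'a}. y)"
    by (simp add: prod.distrib)
  then show ?thesis
    by (simp add: card_Diff_subset)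
qed

lemma power_gcd_is_power:
  fixes x :: "'a::monoid_mult"
  assumes "x ^ n = 1" and "N \<noteq> 0"
  shows "\<exists>y. y ^ N = x ^ gcd n N"
proof -
  obtain s t where "N * s = n * t + gcd N n"
    using bezout_nat [OF \<open>N \<noteq> 0\<close>] by blast
  then have "(x ^ s) ^ N = (x ^ n) ^ t * x ^ gcd n N"
    by (simp add: power_mult [symmetric] power_add mult.commute gcd.commute)
  then show ?thesis
    using assms(1) by auto
qed

lemma card_disc_fibre_poly_rescale:
  fixes a :: "'a::field"
  assumes "a \<noteq> 0" and "sum_mset lam = m"
  shows "card {f \<in> S_lam lam. disc f = \<delta> / a ^ (m * (m - 1))} =
    card {f \<in> S_lam lam. disc f = \<delta>}"
proof -
  have disc: "disc (poly_rescale b f) = disc f / b ^ (m * (m - 1))"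
    if "b \<noteq> 0" "f \<in> S_lam lam" for b f
    using that assms(2) by (simp add: disc_poly_rescale degree_S_lam)
  let ?fibre = "\<lambda>\<delta>. {f \<in> S_lam lam. disc f = \<delta>}"
  have "bij_betw (poly_rescale a) (?fibre \<delta>) (?fibre (\<delta> / a ^ (m * (m - 1))))"
  proof (rule bij_betw_byWitness [where f' = "poly_rescale (inverse a)"])
    show "\<forall>f\<in>?fibre \<delta>. poly_rescale (inverse a) (poly_rescale a f) = f"
      using assms(1) by simp
    show "\<forall>f\<in>?fibre (\<delta> / a ^ (m * (m - 1))). poly_rescale a (poly_rescale (inverse a) f) = f"
      using assms(1) poly_rescale_inverse [of "inverse a"] by simp
    show "poly_rescale a ` ?fibre \<delta> \<subseteq> ?fibre (\<delta> / a ^ (m * (m - 1)))"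
      using assms(1) by (auto simp: poly_rescale_S_lam disc)
    show "poly_rescale (inverse a) ` ?fibre (\<delta> / a ^ (m * (m - 1))) \<subseteq> ?fibre \<delta>"
      using assms(1) by (auto simp: poly_rescale_S_lam disc power_inverse)
  qed
  then show ?thesis
    by (simp add: bij_betw_same_card)
qed

theorem lemma4p3:
  fixes lam :: "nat multiset" and m :: nat and \<delta>1 \<delta>2 :: "'a :: {field, finite}"
  assumes "m \<ge> 2"
    and "\<forall>k \<in># lam. k > 0" and "sum_mset lam = m"
    and "(S_lam lam :: 'a poly set) \<noteq> {}"
    and "\<delta>1 \<in> D_lam lam" and "\<delta>2 \<in> D_lam lam"
    and "\<exists>x::'a. x \<noteq> 0 \<and> \<delta>2 / \<delta>1 = x ^ gcd (card (UNIV :: 'a set) - 1) (m * (m - 1))"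
  shows "card {f \<in> S_lam lam. disc f = \<delta>1} = card {f \<in> S_lam lam. disc f = \<delta>2}"
proof -
  define N where "N = m * (m - 1)"
  define g where "g = gcd (card (UNIV :: 'a set) - 1) N"
  obtain x :: 'a where "x \<noteq> 0" and x: "\<delta>2 / \<delta>1 = x ^ g"
    using assms(7) unfolding g_def N_def by blast
  then have "\<delta>1 \<noteq> 0"
    by auto
  with x have \<delta>2: "\<delta>2 = \<delta>1 * x ^ g"
    by (simp add: field_simps)
  have "N \<noteq> 0"
    using \<open>m \<ge> 2\<close> by (simp add: N_def)
  then obtain y where y: "y ^ N = x ^ g"
    using power_gcd_is_power [OF field_power_card_minus_one [OF \<open>x \<noteq> 0\<close>]]
    unfolding g_def by blast
  with \<open>x \<noteq> 0\<close> \<open>N \<noteq> 0\<close> have "y \<noteq> 0"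
    by (cases "y = 0") (auto simp: zero_power)
  from \<delta>2 y have "\<delta>2 = \<delta>1 / inverse y ^ N"
    by (simp add: power_inverse divide_inverse)
  with \<open>y \<noteq> 0\<close> show ?thesis
    using card_disc_fibre_poly_rescale [of "inverse y" lam m \<delta>1] assms(3) by (simp add: N_def)
qed

end
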